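(* Let $N\ge 2$ and $b_1,\dots,b_N\in\{0,1\}$ with $b_N=1$ and $\sum_{j=1}^N b_j 2^{N-j}>1$. Let $s_b$ be the largest real root of $P_b(x)=x^N-\sum_{j=1}^N b_jx^{N-j}$. Then $s_b$ is an algebraic integer of degree greater than $1$. *)

theory Defs
  imports Complex_Main "HOL-Computational_Algebra.Polynomial"
begin

definition algebraic_int :: "'a :: field_char_0 \<Rightarrow> bool" where
  "algebraic_int x \<longleftrightarrow> (\<exists>p :: int poly. lead_coeff p = 1 \<and> poly (map_poly of_int p) x = 0)"

definition alg_degree :: "'a :: field_char_0 \<Rightarrow> nat" where
  "alg_degree x = (LEAST n. \<exists>p :: rat poly. p \<noteq> 0 \<and> degree p = n \<and> poly (map_poly of_rat p) x = 0)"

definition Pb :: "nat \<Rightarrow> (nat \<Rightarrow> nat) \<Rightarrow> real poly" where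
  "Pb N b = monom 1 N - (\<Sum>j = 1..N. monom (real (b j)) (N - j))"

end

theory Submission
  imports Defs
begin

text \<open>
  \<open>P\<^sub>b\<close> is monic with integer coefficients, so \<open>s\<^sub>b\<close> is an algebraic integer, and
  \<open>P\<^sub>b(0) = -1 < 0 < P\<^sub>b(2)\<close> shows \<open>s\<^sub>b > 0\<close>. If \<open>s\<^sub>b\<close> were rational, it would be a
  rational algebraic integer, hence a positive integer dividing the constant coefficient \<open>-1\<close>,
  i.e. \<open>s\<^sub>b = 1\<close>. But \<open>P\<^sub>b(1) = 0\<close> forces \<open>b\<^sub>j = 0\<close> for \<open>j < N\<close>, so the binary number
  \<open>b\<^sub>1\<dots>b\<^sub>N\<close> would be \<open>1\<close>. An irrational number has no rational minimal polynomial of degree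
  \<open>\<le> 1\<close>.
\<close>

lemma root_dvd_coeff_0:
  fixes p :: "'a :: comm_ring_1 poly"
  assumes "poly p x = 0" shows "x dvd coeff p 0"
proof (cases p)
  case (pCons a q)
  then have "a = - (x * poly q x)" using assms by (simp add: eq_neg_iff_add_eq_0)
  then show ?thesis using pCons by simp
qed

lemma poly_map_poly_of_int: "poly (map_poly of_int p) (of_int x) = of_int (poly p x)"
  by (induction p) (simp_all add: map_poly_pCons)

lemma rat_poly_root_in_Rats:
  fixes x :: "'a :: field_char_0"
  assumes "p \<noteq> 0" "degree p \<le> 1" "poly (map_poly of_rat p) x = 0"
  shows "x \<in> \<rat>"
proof -
  have p: "p = [:coeff p 0, coeff p 1:]"
    using assms(2) by (intro poly_eqI) (auto simp: coeff_pCons coeff_eq_0 split: nat.split)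
  define a b where "a = coeff p 0" and "b = coeff p 1"
  have "map_poly of_rat p = ([:of_rat a, of_rat b:] :: 'a poly)"
    unfolding a_def b_def by (subst p) (simp add: map_poly_pCons)
  then have "of_rat a + x * of_rat b = 0"
    using assms(3) by simp
  moreover have "b \<noteq> 0"
    using assms(1) p calculation by (auto simp: b_def a_def)
  ultimately have "x = - of_rat a / of_rat b"
    by (simp add: field_simps eq_neg_iff_add_eq_0 add.commute)
  then show ?thesis by simp
qed

lemma alg_degree_gt_1_if_not_Rats:
  fixes x :: "'a :: field_char_0"
  assumes "p \<noteq> 0" "poly (map_poly of_rat p) x = 0" "x \<notin> \<rat>"
  shows "alg_degree x > 1"
proof -
  have "\<exists>q :: rat poly. q \<noteq> 0 \<and> degree q = alg_degree x \<and> poly (map_poly of_rat q) x = 0"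
    unfolding alg_degree_def by (rule LeastI[of _ "degree p"]) (use assms(1,2) in blast)
  then show ?thesis using rat_poly_root_in_Rats assms(3) by (metis not_less)
qed

lemma algebraic_int_iff_Polynomial_algebraic_int:
  "algebraic_int x \<longleftrightarrow> Polynomial.algebraic_int x"
  unfolding algebraic_int_def algebraic_int_altdef_ipoly by blast

lemma binary_value_less:
  assumes "\<forall>j\<in>{1..N}. b j \<in> {0, 1}"
  shows "(\<Sum>j = 1..N. b j * 2 ^ (N - j)) < (2::nat) ^ N"
  using assms
proof (induction N)
  case 0 then show ?case by simp
next
  case (Suc N)
  have IH: "(\<Sum>j = 1..N. b j * 2 ^ (N - j)) < 2 ^ N" using Suc by simp
  have "b (Suc N) \<le> 1" using Suc.prems[rule_format, of "Suc N"] by auto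
  moreover have "(\<Sum>j = 1..Suc N. b j * 2 ^ (Suc N - j)) = 2 * (\<Sum>j = 1..N. b j * 2 ^ (N - j)) + b (Suc N)"
    by (simp add: sum_distrib_left Suc_diff_le mult.left_commute)
  ultimately show ?case using IH by simp
qed

definition int_Pb :: "nat \<Rightarrow> (nat \<Rightarrow> nat) \<Rightarrow> int poly" where
  "int_Pb N b = monom 1 N - (\<Sum>j = 1..N. monom (int (b j)) (N - j))"

lemma coeff_int_Pb:
  "coeff (int_Pb N b) n = (if N = n then 1 else 0) - (\<Sum>j = 1..N. if N - j = n then int (b j) else 0)"
  by (simp add: int_Pb_def coeff_sum)

lemma poly_int_Pb: "poly (int_Pb N b) x = x ^ N - (\<Sum>j = 1..N. int (b j) * x ^ (N - j))"
  by (simp add: int_Pb_def poly_monom poly_sum)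

lemma Pb_eq_of_int_poly: "Pb N b = map_poly of_int (int_Pb N b)"
  by (rule poly_eqI) (simp add: Pb_def coeff_map_poly coeff_int_Pb coeff_sum of_int_sum if_distrib cong: if_cong)

lemma lead_coeff_int_Pb:
  assumes "N \<ge> 1" shows "lead_coeff (int_Pb N b) = 1"
proof -
  have coeff_N: "coeff (int_Pb N b) N = 1"
    using assms by (auto simp: coeff_int_Pb intro!: sum.neutral)
  have "degree (int_Pb N b) \<le> N"
    by (rule degree_le) (auto simp: coeff_int_Pb intro!: sum.neutral)
  moreover have "N \<le> degree (int_Pb N b)"
    by (rule le_degree) (simp add: coeff_N)
  ultimately show ?thesis using coeff_N by simp
qed

lemma coeff_0_int_Pb:
  assumes "N \<ge> 1" shows "coeff (int_Pb N b) 0 = - int (b N)"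
proof -
  have "(\<Sum>j = 1..N. if N - j = 0 then int (b j) else 0) = (\<Sum>j \<in> {N}. int (b j))"
    using assms by (intro sum.mono_neutral_cong_right) auto
  then show ?thesis using assms by (simp add: coeff_int_Pb)
qed

lemma Pb_has_positive_root:
  assumes "N \<ge> 1" "\<forall>j\<in>{1..N}. b j \<in> {0, 1}" "b N = 1"
  obtains r :: real where "r > 0" "poly (Pb N b) r = 0"
proof -
  have "poly (Pb N b) 0 = -1"
    using assms by (simp add: poly_0_coeff_0 Pb_eq_of_int_poly coeff_map_poly coeff_0_int_Pb)
  moreover have "poly (Pb N b) 2 > 0"
  proof -
    have "poly (Pb N b) 2 = real (2 ^ N) - real (\<Sum>j = 1..N. b j * 2 ^ (N - j))"
      by (simp add: Pb_def poly_monom poly_sum)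
    then show ?thesis using binary_value_less[OF assms(2)] by linarith
  qed
  ultimately show ?thesis using poly_IVT_pos[of 0 2 "Pb N b"] that by auto
qed

lemma int_Pb_positive_root_eq_1:
  fixes m :: int
  assumes "N \<ge> 1" "b N = 1" "m > 0" "poly (int_Pb N b) m = 0"
  shows "m = 1"
  using root_dvd_coeff_0[OF assms(4)] assms(1-3) by (simp add: coeff_0_int_Pb)

lemma binary_value_eq_1_if_root_1:
  assumes "N \<ge> 1" "b N = 1" "poly (int_Pb N b) 1 = 0"
  shows "(\<Sum>j = 1..N. b j * 2 ^ (N - j)) = 1"
proof -
  have "b N + (\<Sum>j = 1..<N. b j) = 1"
    using assms(1,3) by (simp add: poly_int_Pb sum.last_plus flip: of_nat_sum)
  then have "\<forall>j \<in> {1..<N}. b j = 0" using assms(2) by simp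
  then show ?thesis using assms(1,2) by (simp add: sum.last_plus)
qed

lemma algebraic_int_Pb_root:
  assumes "N \<ge> 1" "poly (Pb N b) x = 0"
  shows "algebraic_int x"
  unfolding algebraic_int_def using lead_coeff_int_Pb[OF assms(1)] assms(2)
  by (auto simp: Pb_eq_of_int_poly)

lemma alg_degree_Pb_root_gt_1:
  assumes "N \<ge> 1" "poly (Pb N b) x = 0" "x \<notin> \<rat>"
  shows "alg_degree x > 1"
proof (rule alg_degree_gt_1_if_not_Rats)
  show "map_poly of_int (int_Pb N b) \<noteq> (0 :: rat poly)"
    using lead_coeff_int_Pb[OF assms(1), of b] by (auto simp: map_poly_eq_0_iff)
  show "poly (map_poly of_rat (map_poly of_int (int_Pb N b))) x = 0"
    using assms(2) by (simp add: Pb_eq_of_int_poly map_poly_map_poly o_def)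
qed (fact assms(3))

lemma Pb_positive_root_not_Rats:
  assumes "N \<ge> 1" "b N = 1" "(\<Sum>j = 1..N. b j * 2 ^ (N - j)) > 1"
    and "x > 0" "poly (Pb N b) x = 0"
  shows "x \<notin> \<rat>"
proof
  assume "x \<in> \<rat>"
  moreover have "Polynomial.algebraic_int x"
    using algebraic_int_Pb_root assms(1,5) algebraic_int_iff_Polynomial_algebraic_int by blast
  ultimately obtain m where m: "x = of_int m"
    by (metis rational_algebraic_int_is_int Ints_cases)
  have "poly (int_Pb N b) m = 0"
    using assms(5) by (simp add: m Pb_eq_of_int_poly poly_map_poly_of_int)
  moreover from this have "m = 1"
    using int_Pb_positive_root_eq_1 assms(1,2,4) m by simp
  ultimately show False
    using binary_value_eq_1_if_root_1 assms(1-3) by simp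
qed

theorem mainTheorem5:
  fixes N :: nat and b :: "nat \<Rightarrow> nat" and s :: real
  assumes "N \<ge> 2"
    and "\<forall>j\<in>{1..N}. b j \<in> {0, 1}"
    and "b N = 1"
    and "(\<Sum>j = 1..N. b j * 2 ^ (N - j)) > 1"
    and "poly (Pb N b) s = 0"
    and "\<forall>x. poly (Pb N b) x = 0 \<longrightarrow> x \<le> s"
  shows "algebraic_int s \<and> alg_degree s > 1"
proof
  have N: "N \<ge> 1" using assms(1) by simp
  show "algebraic_int s" using algebraic_int_Pb_root N assms(5) .
  obtain r where "r > 0" "poly (Pb N b) r = 0"
    using Pb_has_positive_root N assms(2,3) .
  then have "s > 0" using assms(6) by force
  then have "s \<notin> \<rat>" using Pb_positive_root_not_Rats N assms(3-5) by blast
  then show "alg_degree s > 1" using alg_degree_Pb_root_gt_1 N assms(5) by blast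
qed

end
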